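(* Let $A$ be any one of the following complex Leibniz algebras: (i) for $n\ge 2$, $R$ with basis $\{h,e_1,\dots,e_n\}$ and nonzero products $[e_i,e_1]=e_{i+1}$ ($1\le i\le n-1$), $[h,e_1]=-e_1$, $[e_i,h]=ie_i$ ($1\le i\le n$); (ii) for $n\ge 4$, $R(F_n^1)$, $\mathcal L_1$ or $\mathcal L_2$ with basis $\{h_1,h_2,e_1,\dots,e_n\}$, where $R(F_n^1)$ has nonzero products $[e_i,e_1]=e_{i+1}$ ($2\le i\le n-1$), $[e_1,h_2]=e_1$, $[h_2,e_1]=-e_1$, $[e_i,h_1]=e_i$, $[e_i,h_2]=(i-1)e_i$ ($2\le i\le n$); $\mathcal L_1$ has nonzero products $[e_1,e_1]=e_3$, $[e_i,e_1]=e_{i+1}$ ($3\le i\le n-1$), $[e_1,h_2]=e_1$, $[h_2,e_1]=-e_1$, $[e_2,h_1]=e_2$, $[h_1,e_2]=-e_2$, $[e_i,h_2]=(i-1)e_i$ ($3\le i\le n$); and $\mathcal L_2$ is as $\mathcal L_1$ but with $[h_1,e_2]=0$. Then the Leibniz algebra $\mathrm{Bider}(A)$ is isomorphic to $A$.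
   Context: Leibniz algebras are right Leibniz over $\mathbb C$: $[x,[y,z]]=[[x,y],z]-[[x,z],y]$. Unlisted products are zero. A derivation is a linear $d$ with $d([x,y])=[d(x),y]+[x,d(y)]$; an anti-derivation is a linear $D$ with $D([x,y])=[D(x),y]-[D(y),x]$; a biderivation is a pair $(d,D)$ of a derivation and an anti-derivation with $[x,d(y)]=[x,D(y)]$ for all $x,y$. $\mathrm{Bider}(A)$ is the set of all biderivations with the Leibniz bracket $[(d,D),(d',D')]=(d\circ d'-d'\circ d,\ D\circ d'-d'\circ D)$. *)

theory Defs
  imports Complex_Main "HOL-Library.Function_Algebras"
begin

text \<open>Finite-dimensional complex algebras with basis indexed by 0..N-1.
  Vectors are functions nat => complex vanishing at indices >= N;
  linear maps are N x N matrices (nat => nat => complex) vanishing outside.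
  The bracket is given by bb i j = the vector [b_i, b_j].\<close>

definition vecs :: "nat \<Rightarrow> (nat \<Rightarrow> complex) set" where
  "vecs N = {x. \<forall>k\<ge>N. x k = 0}"

definition mats :: "nat \<Rightarrow> (nat \<Rightarrow> nat \<Rightarrow> complex) set" where
  "mats N = {M. \<forall>i j. (N \<le> i \<or> N \<le> j) \<longrightarrow> M i j = 0}"

definition bv :: "nat \<Rightarrow> nat \<Rightarrow> complex" where
  "bv i = (\<lambda>k. if k = i then 1 else 0)"

definition sv :: "complex \<Rightarrow> (nat \<Rightarrow> complex) \<Rightarrow> nat \<Rightarrow> complex" where
  "sv a v = (\<lambda>k. a * v k)"

definition brk :: "nat \<Rightarrow> (nat \<Rightarrow> nat \<Rightarrow> nat \<Rightarrow> complex) \<Rightarrow>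
    (nat \<Rightarrow> complex) \<Rightarrow> (nat \<Rightarrow> complex) \<Rightarrow> nat \<Rightarrow> complex" where
  "brk N bb x y = (\<lambda>k. if k < N then (\<Sum>i<N. \<Sum>j<N. x i * y j * bb i j k) else 0)"

definition mv :: "nat \<Rightarrow> (nat \<Rightarrow> nat \<Rightarrow> complex) \<Rightarrow> (nat \<Rightarrow> complex) \<Rightarrow> nat \<Rightarrow> complex" where
  "mv N M x = (\<lambda>i. \<Sum>j<N. M i j * x j)"

definition mm :: "nat \<Rightarrow> (nat \<Rightarrow> nat \<Rightarrow> complex) \<Rightarrow> (nat \<Rightarrow> nat \<Rightarrow> complex) \<Rightarrow> nat \<Rightarrow> nat \<Rightarrow> complex" where
  "mm N A B = (\<lambda>i k. \<Sum>j<N. A i j * B j k)"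

definition is_derivation where
  "is_derivation N bb d \<longleftrightarrow> d \<in> mats N \<and>
     (\<forall>x\<in>vecs N. \<forall>y\<in>vecs N. mv N d (brk N bb x y) = brk N bb (mv N d x) y + brk N bb x (mv N d y))"

definition is_antiderivation where
  "is_antiderivation N bb D \<longleftrightarrow> D \<in> mats N \<and>
     (\<forall>x\<in>vecs N. \<forall>y\<in>vecs N. mv N D (brk N bb x y) = brk N bb (mv N D x) y - brk N bb (mv N D y) x)"

definition Bider where
  "Bider N bb = {(d, D). is_derivation N bb d \<and> is_antiderivation N bb D \<and>
      (\<forall>x\<in>vecs N. \<forall>y\<in>vecs N. brk N bb x (mv N d y) = brk N bb x (mv N D y))}"

definition bider_bracket where
  "bider_bracket N X Y = (mm N (fst X) (fst Y) - mm N (fst Y) (fst X),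
                          mm N (snd X) (fst Y) - mm N (fst Y) (snd X))"

definition pair_lin :: "complex \<Rightarrow> _ \<Rightarrow> _ \<Rightarrow> (nat \<Rightarrow> nat \<Rightarrow> complex) \<times> (nat \<Rightarrow> nat \<Rightarrow> complex)" where
  "pair_lin a X Y = ((\<lambda>i j. a * fst X i j + fst Y i j), (\<lambda>i j. a * snd X i j + snd Y i j))"

definition bider_iso_to_A :: "nat \<Rightarrow> (nat \<Rightarrow> nat \<Rightarrow> nat \<Rightarrow> complex) \<Rightarrow> bool" where
  "bider_iso_to_A N bb \<longleftrightarrow> (\<exists>\<phi>. bij_betw \<phi> (Bider N bb) (vecs N) \<and>
     (\<forall>X\<in>Bider N bb. \<forall>Y\<in>Bider N bb. \<forall>a. \<phi> (pair_lin a X Y) = sv a (\<phi> X) + \<phi> Y) \<and>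
     (\<forall>X\<in>Bider N bb. \<forall>Y\<in>Bider N bb. \<phi> (bider_bracket N X Y) = brk N bb (\<phi> X) (\<phi> Y)))"

text \<open>Algebra R (n >= 2): basis h = b_0, e_i = b_i (1 <= i <= n), N = n+1.\<close>
definition R_bb :: "nat \<Rightarrow> nat \<Rightarrow> nat \<Rightarrow> nat \<Rightarrow> complex" where
  "R_bb n i j =
     (if 1 \<le> i \<and> i \<le> n - 1 \<and> j = 1 then bv (i+1) else 0)
   + (if i = 0 \<and> j = 1 then sv (-1) (bv 1) else 0)
   + (if 1 \<le> i \<and> i \<le> n \<and> j = 0 then sv (of_nat i) (bv i) else 0)"

text \<open>Algebras with basis h_1 = b_0, h_2 = b_1, e_i = b_(i+1) (1 <= i <= n), N = n+2.
  In the definitions below, for an index p >= 2, the basis vector b_p is e_(p-1).\<close>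
definition RF_bb :: "nat \<Rightarrow> nat \<Rightarrow> nat \<Rightarrow> nat \<Rightarrow> complex" where
  "RF_bb n p q =
     (if 2 \<le> p - 1 \<and> p - 1 \<le> n - 1 \<and> 2 \<le> p \<and> q = 2 then bv (p+1) else 0)   \<comment> \<open>[e_i,e_1] = e_(i+1), 2<=i<=n-1\<close>
   + (if p = 2 \<and> q = 1 then bv 2 else 0)                                      \<comment> \<open>[e_1,h_2] = e_1\<close>
   + (if p = 1 \<and> q = 2 then sv (-1) (bv 2) else 0)                            \<comment> \<open>[h_2,e_1] = -e_1\<close>
   + (if 2 \<le> p - 1 \<and> p - 1 \<le> n \<and> 2 \<le> p \<and> q = 0 then bv p else 0)         \<comment> \<open>[e_i,h_1] = e_i, 2<=i<=n\<close>
   + (if 2 \<le> p - 1 \<and> p - 1 \<le> n \<and> 2 \<le> p \<and> q = 1 then sv (of_nat (p - 2)) (bv p) else 0)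
                                                                                \<comment> \<open>[e_i,h_2] = (i-1) e_i, 2<=i<=n\<close>"

definition L2_bb :: "nat \<Rightarrow> nat \<Rightarrow> nat \<Rightarrow> nat \<Rightarrow> complex" where
  "L2_bb n p q =
     (if p = 2 \<and> q = 2 then bv 4 else 0)                                      \<comment> \<open>[e_1,e_1] = e_3\<close>
   + (if 3 \<le> p - 1 \<and> p - 1 \<le> n - 1 \<and> 2 \<le> p \<and> q = 2 then bv (p+1) else 0)   \<comment> \<open>[e_i,e_1] = e_(i+1), 3<=i<=n-1\<close>
   + (if p = 2 \<and> q = 1 then bv 2 else 0)                                      \<comment> \<open>[e_1,h_2] = e_1\<close>
   + (if p = 1 \<and> q = 2 then sv (-1) (bv 2) else 0)                            \<comment> \<open>[h_2,e_1] = -e_1\<close>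
   + (if p = 3 \<and> q = 0 then bv 3 else 0)                                      \<comment> \<open>[e_2,h_1] = e_2\<close>
   + (if 3 \<le> p - 1 \<and> p - 1 \<le> n \<and> 2 \<le> p \<and> q = 1 then sv (of_nat (p - 2)) (bv p) else 0)
                                                                                \<comment> \<open>[e_i,h_2] = (i-1) e_i, 3<=i<=n\<close>"

definition L1_bb :: "nat \<Rightarrow> nat \<Rightarrow> nat \<Rightarrow> nat \<Rightarrow> complex" where
  "L1_bb n p q = L2_bb n p q
   + (if p = 0 \<and> q = 3 then sv (-1) (bv 3) else 0)"                           \<comment> \<open>[h_1,e_2] = -e_2\<close>

end

theory Submission
  imports Defs
begin

text \<open>
  In a right Leibniz algebra, right multiplication \<open>R\<^sub>x y = [y, x]\<close> is a derivation, left
  multiplication \<open>L\<^sub>x y = [x, y]\<close> is an anti-derivation, and \<open>(-R\<^sub>x, L\<^sub>x)\<close> is a biderivation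
  because \<open>[y, [x, z] + [z, x]] = 0\<close>; the Leibniz identity makes \<open>x \<mapsto> (-R\<^sub>x, L\<^sub>x)\<close> a
  homomorphism \<open>A \<rightarrow> Bider(A)\<close>. For each of the four algebras, a few matrix entries of a
  biderivation define a linear map \<open>\<psi> : Bider(A) \<rightarrow> A\<close> with \<open>\<psi>(-R\<^sub>x, L\<^sub>x) = x\<close>. Solving the
  derivation, anti-derivation and compatibility equations on basis vectors shows that a
  biderivation with \<open>\<psi> = 0\<close> vanishes. Hence every biderivation is inner and \<open>\<psi>\<close> is an
  isomorphism of Leibniz algebras.
\<close>

lemma of_nat_eq_numeral_iff_char_0 [simp]:
  "(of_nat k :: 'a::semiring_char_0) = numeral m \<longleftrightarrow> k = numeral m"
  using of_nat_eq_iff[of k "numeral m"] by simp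

lemma zero_by_successor_step:
  fixes f :: "nat \<Rightarrow> 'a::zero"
  assumes "m \<le> i" "i \<le> p" "f m = 0" "\<And>i. m \<le> i \<Longrightarrow> i < p \<Longrightarrow> f (Suc i) = f i"
  shows "f i = 0"
proof -
  have "i \<le> p \<longrightarrow> f i = 0"
    using assms(1) by (induction rule: dec_induct) (use assms(3,4) in auto)
  then show ?thesis using assms(2) by simp
qed

lemma sum_delta_mult:
  "(\<Sum>m<(N::nat). (if m = q then c else 0) * f m) = (if q < N then c * f q else (0::'a::semiring_0))"
  by (simp add: if_distrib[of "\<lambda>x. x * _"] cong: if_cong)

lemma sum_mult_delta:
  "(\<Sum>m<(N::nat). f m * (if m = q then c else 0)) = (if q < N then f q * c else (0::'a::semiring_0))"
  by (simp add: if_distrib[of "\<lambda>x. _ * x"] cong: if_cong)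

section \<open>Structure constants and the Leibniz identity\<close>

lemma brk_brk_right_expand:
  assumes "k < N"
  shows "brk N bb x (brk N bb y z) k =
    (\<Sum>a<N. \<Sum>b<N. \<Sum>c<N. x a * y b * z c * (\<Sum>m<N. bb b c m * bb a m k))"
proof -
  have "brk N bb x (brk N bb y z) k =
      (\<Sum>a<N. \<Sum>m<N. \<Sum>b<N. \<Sum>c<N. x a * y b * z c * (bb b c m * bb a m k))"
    using assms by (simp add: brk_def sum_distrib_left sum_distrib_right mult_ac)
  also have "\<dots> = (\<Sum>a<N. \<Sum>b<N. \<Sum>m<N. \<Sum>c<N. x a * y b * z c * (bb b c m * bb a m k))"
    by (rule sum.cong[OF refl], rule sum.swap)
  also have "\<dots> = (\<Sum>a<N. \<Sum>b<N. \<Sum>c<N. \<Sum>m<N. x a * y b * z c * (bb b c m * bb a m k))"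
    by (rule sum.cong[OF refl], rule sum.cong[OF refl], rule sum.swap)
  finally show ?thesis by (simp add: sum_distrib_left)
qed

lemma brk_brk_left_expand:
  assumes "k < N"
  shows "brk N bb (brk N bb x y) z k =
    (\<Sum>a<N. \<Sum>b<N. \<Sum>c<N. x a * y b * z c * (\<Sum>m<N. bb a b m * bb m c k))"
proof -
  have "brk N bb (brk N bb x y) z k =
      (\<Sum>m<N. \<Sum>c<N. \<Sum>a<N. \<Sum>b<N. x a * y b * z c * (bb a b m * bb m c k))"
    using assms by (simp add: brk_def sum_distrib_left sum_distrib_right mult_ac)
  also have "\<dots> = (\<Sum>c<N. \<Sum>a<N. \<Sum>m<N. \<Sum>b<N. x a * y b * z c * (bb a b m * bb m c k))"
    by (subst sum.swap) (rule sum.cong[OF refl], rule sum.swap)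
  also have "\<dots> = (\<Sum>a<N. \<Sum>c<N. \<Sum>b<N. \<Sum>m<N. x a * y b * z c * (bb a b m * bb m c k))"
    by (subst sum.swap) (rule sum.cong[OF refl], rule sum.cong[OF refl], rule sum.swap)
  also have "\<dots> = (\<Sum>a<N. \<Sum>b<N. \<Sum>c<N. \<Sum>m<N. x a * y b * z c * (bb a b m * bb m c k))"
    by (rule sum.cong[OF refl], rule sum.swap)
  finally show ?thesis by (simp add: sum_distrib_left)
qed

definition is_leibniz :: "nat \<Rightarrow> (nat \<Rightarrow> nat \<Rightarrow> nat \<Rightarrow> complex) \<Rightarrow> bool" where
  "is_leibniz N bb \<longleftrightarrow> (\<forall>a<N. \<forall>b<N. \<forall>c<N. \<forall>k<N. (\<Sum>m<N. bb b c m * bb a m k) =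
      (\<Sum>m<N. bb a b m * bb m c k) - (\<Sum>m<N. bb a c m * bb m b k))"

lemma brk_leibniz:
  assumes "is_leibniz N bb"
  shows "brk N bb x (brk N bb y z) = brk N bb (brk N bb x y) z - brk N bb (brk N bb x z) y"
proof
  fix k
  show "brk N bb x (brk N bb y z) k = (brk N bb (brk N bb x y) z - brk N bb (brk N bb x z) y) k"
  proof (cases "k < N")
    case True
    have swapped: "brk N bb (brk N bb x z) y k =
        (\<Sum>a<N. \<Sum>b<N. \<Sum>c<N. x a * y b * z c * (\<Sum>m<N. bb a c m * bb m b k))"
      unfolding brk_brk_left_expand[OF True]
      by (rule sum.cong[OF refl], rule trans[OF sum.swap]) (simp add: mult_ac)
    have "brk N bb x (brk N bb y z) k = (\<Sum>a<N. \<Sum>b<N. \<Sum>c<N. x a * y b * z c *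
        ((\<Sum>m<N. bb a b m * bb m c k) - (\<Sum>m<N. bb a c m * bb m b k)))"
      unfolding brk_brk_right_expand[OF True] using assms True
      by (intro sum.cong refl) (auto simp: is_leibniz_def)
    then show ?thesis
      using brk_brk_left_expand[OF True, where x=x and y=y and z=z] swapped
      by (simp add: right_diff_distrib sum_subtractf)
  qed (simp add: brk_def)
qed

lemma brk_add_left: "brk N bb (u + v) y = brk N bb u y + brk N bb v y"
  by (rule ext) (simp add: brk_def distrib_left distrib_right sum.distrib)

lemma brk_add_right: "brk N bb x (u + v) = brk N bb x u + brk N bb x v"
  by (rule ext) (simp add: brk_def distrib_left distrib_right sum.distrib)

lemma brk_uminus_left: "brk N bb (- u) y = - brk N bb u y"
  by (rule ext) (simp add: brk_def sum_negf)

lemma brk_uminus_right: "brk N bb x (- v) = - brk N bb x v"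
  by (rule ext) (simp add: brk_def sum_negf)

lemma brk_sv_left: "brk N bb (sv a u) y = sv a (brk N bb u y)"
  by (rule ext) (simp add: brk_def sv_def sum_distrib_left mult_ac)

lemma brk_sv_right: "brk N bb x (sv a v) = sv a (brk N bb x v)"
  by (rule ext) (simp add: brk_def sv_def sum_distrib_left mult_ac)

lemma brk_vecs: "brk N bb x y \<in> vecs N"
  by (simp add: vecs_def brk_def)

lemma brk_brk_anticommute_right:
  assumes "is_leibniz N bb"
  shows "brk N bb y (brk N bb x z) = - brk N bb y (brk N bb z x)"
  using brk_leibniz[OF assms, of y x z] brk_leibniz[OF assms, of y z x]
  by (simp add: eq_neg_iff_add_eq_0)

lemma mv_bv: "a < N \<Longrightarrow> mv N A (bv a) = (\<lambda>k. A k a)"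
  by (rule ext) (simp add: mv_def bv_def if_distrib cong: if_cong)

lemma mats_eqI:
  assumes "A \<in> mats N" "B \<in> mats N" "\<And>v. mv N A v = mv N B v"
  shows "A = B"
proof (intro ext)
  fix k a
  show "A k a = B k a"
  proof (cases "a < N")
    case True
    then show ?thesis using assms(3)[of "bv a"] by (simp add: mv_bv fun_eq_iff)
  qed (use assms(1,2) in \<open>simp add: mats_def\<close>)
qed

lemma mats_eq_0I:
  assumes "A \<in> mats N" "\<And>k j. k < N \<Longrightarrow> j < N \<Longrightarrow> A k j = 0"
  shows "A = 0"
proof (intro ext)
  fix k j
  show "A k j = 0 k j"
    using assms by (cases "k < N \<and> j < N") (auto simp: mats_def)
qed

lemma mv_mm: "mv N (mm N A B) v = mv N A (mv N B v)"
proof (rule ext)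
  fix i
  have "mv N (mm N A B) v i = (\<Sum>k<N. \<Sum>j<N. A i j * B j k * v k)"
    by (simp add: mv_def mm_def sum_distrib_right)
  also have "\<dots> = (\<Sum>j<N. \<Sum>k<N. A i j * B j k * v k)"
    by (rule sum.swap)
  finally show "mv N (mm N A B) v i = mv N A (mv N B v) i"
    by (simp add: mv_def sum_distrib_left mult_ac)
qed

lemma mv_diff: "mv N (A - B) v = mv N A v - mv N B v"
  by (rule ext) (simp add: mv_def left_diff_distrib sum_subtractf)

lemma mv_lin_comb: "mv N (\<lambda>i j. a * A i j + B i j) v = sv a (mv N A v) + mv N B v"
  by (rule ext) (simp add: mv_def sv_def algebra_simps sum.distrib sum_distrib_left)

lemma mm_mats: "A \<in> mats N \<Longrightarrow> B \<in> mats N \<Longrightarrow> mm N A B \<in> mats N"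
  by (auto simp: mats_def mm_def)

lemma diff_mats: "A \<in> mats N \<Longrightarrow> B \<in> mats N \<Longrightarrow> A - B \<in> mats N"
  by (auto simp: mats_def)

section \<open>Inner biderivations\<close>

definition minus_rmult_mat :: "nat \<Rightarrow> (nat \<Rightarrow> nat \<Rightarrow> nat \<Rightarrow> complex) \<Rightarrow> (nat \<Rightarrow> complex) \<Rightarrow>
    nat \<Rightarrow> nat \<Rightarrow> complex" where
  "minus_rmult_mat N bb x = (\<lambda>k a. if k < N \<and> a < N then - (\<Sum>j<N. x j * bb a j k) else 0)"

definition lmult_mat :: "nat \<Rightarrow> (nat \<Rightarrow> nat \<Rightarrow> nat \<Rightarrow> complex) \<Rightarrow> (nat \<Rightarrow> complex) \<Rightarrow>
    nat \<Rightarrow> nat \<Rightarrow> complex" where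
  "lmult_mat N bb x = (\<lambda>k a. if k < N \<and> a < N then (\<Sum>i<N. x i * bb i a k) else 0)"

definition inner_bider :: "nat \<Rightarrow> (nat \<Rightarrow> nat \<Rightarrow> nat \<Rightarrow> complex) \<Rightarrow> (nat \<Rightarrow> complex) \<Rightarrow>
    (nat \<Rightarrow> nat \<Rightarrow> complex) \<times> (nat \<Rightarrow> nat \<Rightarrow> complex)" where
  "inner_bider N bb x = (minus_rmult_mat N bb x, lmult_mat N bb x)"

lemma mv_minus_rmult_mat: "mv N (minus_rmult_mat N bb x) y = - brk N bb y x"
proof (rule ext)
  fix k
  show "mv N (minus_rmult_mat N bb x) y k = (- brk N bb y x) k"
  proof (cases "k < N")
    case True
    have "(\<Sum>j<N. x j * bb a j k) * y a = (\<Sum>j<N. y a * x j * bb a j k)" for a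
      unfolding sum_distrib_right by (simp add: mult_ac)
    then have "mv N (minus_rmult_mat N bb x) y k = - (\<Sum>a<N. \<Sum>j<N. y a * x j * bb a j k)"
      using True by (simp add: mv_def minus_rmult_mat_def sum_negf)
    then show ?thesis using True by (simp add: brk_def)
  qed (simp add: mv_def minus_rmult_mat_def brk_def)
qed

lemma mv_lmult_mat: "mv N (lmult_mat N bb x) y = brk N bb x y"
proof (rule ext)
  fix k
  show "mv N (lmult_mat N bb x) y k = brk N bb x y k"
  proof (cases "k < N")
    case True
    have "(\<Sum>i<N. x i * bb i a k) * y a = (\<Sum>i<N. x i * y a * bb i a k)" for a
      unfolding sum_distrib_right by (simp add: mult_ac)
    then have "mv N (lmult_mat N bb x) y k = (\<Sum>a<N. \<Sum>i<N. x i * y a * bb i a k)"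
      using True by (simp add: mv_def lmult_mat_def)
    also have "\<dots> = (\<Sum>i<N. \<Sum>a<N. x i * y a * bb i a k)"
      by (rule sum.swap)
    finally show ?thesis using True by (simp add: brk_def)
  qed (simp add: mv_def lmult_mat_def brk_def)
qed

lemma minus_rmult_mat_mats: "minus_rmult_mat N bb x \<in> mats N"
  by (simp add: mats_def minus_rmult_mat_def)

lemma lmult_mat_mats: "lmult_mat N bb x \<in> mats N"
  by (simp add: mats_def lmult_mat_def)

lemma inner_bider_Bider:
  assumes L: "is_leibniz N bb"
  shows "inner_bider N bb x \<in> Bider N bb"
proof -
  have "is_derivation N bb (minus_rmult_mat N bb x)"
    using brk_leibniz[OF L, of _ _ x]
    by (simp add: is_derivation_def minus_rmult_mat_mats mv_minus_rmult_mat
        brk_uminus_left brk_uminus_right)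
  moreover have "is_antiderivation N bb (lmult_mat N bb x)"
    using brk_leibniz[OF L, of x]
    by (simp add: is_antiderivation_def lmult_mat_mats mv_lmult_mat)
  moreover have "brk N bb u (mv N (minus_rmult_mat N bb x) v) = brk N bb u (mv N (lmult_mat N bb x) v)"
    for u v
    using brk_brk_anticommute_right[OF L, of u x v]
    by (simp add: mv_minus_rmult_mat mv_lmult_mat brk_uminus_right)
  ultimately show ?thesis
    by (simp add: Bider_def inner_bider_def)
qed

lemma bider_bracket_inner:
  assumes L: "is_leibniz N bb"
  shows "bider_bracket N (inner_bider N bb x) (inner_bider N bb y) = inner_bider N bb (brk N bb x y)"
proof -
  have "mm N (minus_rmult_mat N bb x) (minus_rmult_mat N bb y) - mm N (minus_rmult_mat N bb y) (minus_rmult_mat N bb x)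
      = minus_rmult_mat N bb (brk N bb x y)"
  proof (rule mats_eqI)
    show "mv N (mm N (minus_rmult_mat N bb x) (minus_rmult_mat N bb y)
        - mm N (minus_rmult_mat N bb y) (minus_rmult_mat N bb x)) v = mv N (minus_rmult_mat N bb (brk N bb x y)) v" for v
      using brk_leibniz[OF L, of v y x] brk_brk_anticommute_right[OF L, of v y x]
      by (simp add: mv_diff mv_mm mv_minus_rmult_mat brk_uminus_left)
  qed (simp_all add: minus_rmult_mat_mats mm_mats diff_mats)
  moreover have "mm N (lmult_mat N bb x) (minus_rmult_mat N bb y) - mm N (minus_rmult_mat N bb y) (lmult_mat N bb x)
      = lmult_mat N bb (brk N bb x y)"
  proof (rule mats_eqI)
    show "mv N (mm N (lmult_mat N bb x) (minus_rmult_mat N bb y)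
        - mm N (minus_rmult_mat N bb y) (lmult_mat N bb x)) v = mv N (lmult_mat N bb (brk N bb x y)) v" for v
      using brk_leibniz[OF L, of x v y]
      by (simp add: mv_diff mv_mm mv_minus_rmult_mat mv_lmult_mat brk_uminus_left brk_uminus_right)
  qed (simp_all add: minus_rmult_mat_mats lmult_mat_mats mm_mats diff_mats)
  ultimately show ?thesis
    by (simp add: bider_bracket_def inner_bider_def)
qed

lemma pair_lin_Bider:
  assumes "X \<in> Bider N bb" "Y \<in> Bider N bb"
  shows "pair_lin a X Y \<in> Bider N bb"
proof -
  obtain d D e E where X: "X = (d, D)" and Y: "Y = (e, E)"
    by (cases X, cases Y)
  have h: "is_derivation N bb d" "is_antiderivation N bb D"
     "\<forall>x\<in>vecs N. \<forall>y\<in>vecs N. brk N bb x (mv N d y) = brk N bb x (mv N D y)"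
     "is_derivation N bb e" "is_antiderivation N bb E"
     "\<forall>x\<in>vecs N. \<forall>y\<in>vecs N. brk N bb x (mv N e y) = brk N bb x (mv N E y)"
    using assms X Y by (auto simp: Bider_def)
  have m: "(\<lambda>i j. a * d i j + e i j) \<in> mats N" "(\<lambda>i j. a * D i j + E i j) \<in> mats N"
    using h by (auto simp: is_derivation_def is_antiderivation_def mats_def)
  have "is_derivation N bb (\<lambda>i j. a * d i j + e i j)"
    using h(1,4) m
    by (simp add: is_derivation_def mv_lin_comb brk_add_left brk_add_right brk_sv_left brk_sv_right)
      (simp add: sv_def fun_eq_iff algebra_simps)
  moreover have "is_antiderivation N bb (\<lambda>i j. a * D i j + E i j)"
    using h(2,5) m
    by (simp add: is_antiderivation_def mv_lin_comb brk_add_left brk_add_right brk_sv_left brk_sv_right)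
      (simp add: sv_def fun_eq_iff algebra_simps)
  moreover have "\<forall>x\<in>vecs N. \<forall>y\<in>vecs N. brk N bb x (mv N (\<lambda>i j. a * d i j + e i j) y)
      = brk N bb x (mv N (\<lambda>i j. a * D i j + E i j) y)"
    using h(3,6) by (simp add: mv_lin_comb brk_add_right brk_sv_right)
  ultimately show ?thesis
    using X Y by (simp add: pair_lin_def Bider_def)
qed

lemma Bider_eq_inner_bider:
  assumes L: "is_leibniz N bb"
    and retract: "\<And>x. x \<in> vecs N \<Longrightarrow> \<psi> (inner_bider N bb x) = x"
    and vecs: "\<And>X. X \<in> Bider N bb \<Longrightarrow> \<psi> X \<in> vecs N"
    and linear: "\<And>X Y a. X \<in> Bider N bb \<Longrightarrow> Y \<in> Bider N bb \<Longrightarrow> \<psi> (pair_lin a X Y) = sv a (\<psi> X) + \<psi> Y"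
    and kernel: "\<And>X. X \<in> Bider N bb \<Longrightarrow> \<psi> X = 0 \<Longrightarrow> X = (0, 0)"
    and X: "X \<in> Bider N bb"
  shows "X = inner_bider N bb (\<psi> X)"
proof -
  define Y where "Y = pair_lin (-1) (inner_bider N bb (\<psi> X)) X"
  have Y: "Y \<in> Bider N bb"
    unfolding Y_def by (rule pair_lin_Bider[OF inner_bider_Bider[OF L] X])
  have "\<psi> Y = sv (-1) (\<psi> X) + \<psi> X"
    unfolding Y_def linear[OF inner_bider_Bider[OF L] X] retract[OF vecs[OF X]] ..
  then have "Y = (0, 0)"
    by (intro kernel[OF Y]) (simp add: sv_def fun_eq_iff)
  then show ?thesis
    unfolding Y_def pair_lin_def by (simp add: fun_eq_iff prod_eq_iff)
qed

lemma bider_iso_to_A_by_retraction: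
  assumes L: "is_leibniz N bb"
    and retract: "\<And>x. x \<in> vecs N \<Longrightarrow> \<psi> (inner_bider N bb x) = x"
    and vecs: "\<And>X. X \<in> Bider N bb \<Longrightarrow> \<psi> X \<in> vecs N"
    and linear: "\<And>X Y a. X \<in> Bider N bb \<Longrightarrow> Y \<in> Bider N bb \<Longrightarrow> \<psi> (pair_lin a X Y) = sv a (\<psi> X) + \<psi> Y"
    and kernel: "\<And>X. X \<in> Bider N bb \<Longrightarrow> \<psi> X = 0 \<Longrightarrow> X = (0, 0)"
  shows "bider_iso_to_A N bb"
proof -
  have inner: "X = inner_bider N bb (\<psi> X)" if "X \<in> Bider N bb" for X
    using assms that by (rule Bider_eq_inner_bider)
  have "bij_betw \<psi> (Bider N bb) (vecs N)"
  proof (rule bij_betwI')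
    show "(\<psi> X = \<psi> Y) = (X = Y)" if "X \<in> Bider N bb" "Y \<in> Bider N bb" for X Y
      using inner[OF that(1)] inner[OF that(2)] by metis
    show "\<exists>X\<in>Bider N bb. x = \<psi> X" if "x \<in> vecs N" for x
      using retract[OF that] inner_bider_Bider[OF L] by metis
  qed (rule vecs)
  moreover have "\<psi> (bider_bracket N X Y) = brk N bb (\<psi> X) (\<psi> Y)"
    if "X \<in> Bider N bb" "Y \<in> Bider N bb" for X Y
    using inner[OF that(1)] inner[OF that(2)]
    by (metis bider_bracket_inner[OF L] retract brk_vecs)
  ultimately show ?thesis
    unfolding bider_iso_to_A_def using linear by blast
qed

section \<open>Biderivations in coordinates\<close>

lemma bv_vecs: "a < N \<Longrightarrow> bv a \<in> vecs N"
  by (simp add: vecs_def bv_def)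

lemma sum_bv_mult: "a < N \<Longrightarrow> (\<Sum>i<N. bv a i * f i) = f a"
  by (simp add: bv_def if_distrib[of "\<lambda>c. c * _"] cong: if_cong)

lemma brk_bv_bv:
  "a < N \<Longrightarrow> b < N \<Longrightarrow> brk N bb (bv a) (bv b) = (\<lambda>k. if k < N then bb a b k else 0)"
  by (rule ext) (simp add: brk_def sum_distrib_left[symmetric] sum_distrib_right[symmetric]
      mult.assoc sum_bv_mult)

lemma brk_bv_right: "b < N \<Longrightarrow> k < N \<Longrightarrow> brk N bb u (bv b) k = (\<Sum>i<N. u i * bb i b k)"
  by (simp add: brk_def mult.assoc sum_distrib_left[symmetric] sum_bv_mult)

lemma brk_bv_left: "a < N \<Longrightarrow> k < N \<Longrightarrow> brk N bb (bv a) u k = (\<Sum>j<N. u j * bb a j k)"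
  by (simp add: brk_def mult.assoc sum_distrib_left[symmetric] sum_bv_mult)

lemma mv_restrict: "mv N d (\<lambda>k. if k < N then f k else 0) = mv N d f"
  by (rule ext) (simp add: mv_def)

lemma derivation_coords:
  assumes "is_derivation N bb d" "a < N" "b < N" "k < N"
  shows "(\<Sum>m<N. bb a b m * d k m) = (\<Sum>i<N. d i a * bb i b k) + (\<Sum>j<N. d j b * bb a j k)"
proof -
  have "mv N d (brk N bb (bv a) (bv b)) k
      = brk N bb (mv N d (bv a)) (bv b) k + brk N bb (bv a) (mv N d (bv b)) k"
    using assms bv_vecs[of a N] bv_vecs[of b N] unfolding is_derivation_def by simp
  then show ?thesis
    using assms(2-4)
    by (simp add: brk_bv_bv mv_restrict brk_bv_right brk_bv_left mv_bv) (simp add: mv_def mult.commute)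
qed

lemma antiderivation_coords:
  assumes "is_antiderivation N bb D" "a < N" "b < N" "k < N"
  shows "(\<Sum>m<N. bb a b m * D k m) = (\<Sum>i<N. D i a * bb i b k) - (\<Sum>i<N. D i b * bb i a k)"
proof -
  have "mv N D (brk N bb (bv a) (bv b)) k
      = brk N bb (mv N D (bv a)) (bv b) k - brk N bb (mv N D (bv b)) (bv a) k"
    using assms bv_vecs[of a N] bv_vecs[of b N] unfolding is_antiderivation_def by simp
  then show ?thesis
    using assms(2-4)
    by (simp add: brk_bv_bv mv_restrict brk_bv_right brk_bv_left mv_bv) (simp add: mv_def mult.commute)
qed

lemma Bider_coords:
  assumes "(d, D) \<in> Bider N bb"
  shows "d \<in> mats N" "D \<in> mats N"
    and "\<And>a b k. a < N \<Longrightarrow> b < N \<Longrightarrow> k < N \<Longrightarrow>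
      (\<Sum>m<N. bb a b m * d k m) = (\<Sum>i<N. d i a * bb i b k) + (\<Sum>j<N. d j b * bb a j k)"
    and "\<And>a b k. a < N \<Longrightarrow> b < N \<Longrightarrow> k < N \<Longrightarrow>
      (\<Sum>m<N. bb a b m * D k m) = (\<Sum>i<N. D i a * bb i b k) - (\<Sum>i<N. D i b * bb i a k)"
    and "\<And>a b k. a < N \<Longrightarrow> b < N \<Longrightarrow> k < N \<Longrightarrow>
      (\<Sum>j<N. d j b * bb a j k) = (\<Sum>j<N. D j b * bb a j k)"
proof -
  have h: "is_derivation N bb d" "is_antiderivation N bb D"
     "\<forall>x\<in>vecs N. \<forall>y\<in>vecs N. brk N bb x (mv N d y) = brk N bb x (mv N D y)"
    using assms by (auto simp: Bider_def)
  show "d \<in> mats N" "D \<in> mats N"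
    using h(1,2) by (auto simp: is_derivation_def is_antiderivation_def)
  show "\<And>a b k. a < N \<Longrightarrow> b < N \<Longrightarrow> k < N \<Longrightarrow>
      (\<Sum>m<N. bb a b m * d k m) = (\<Sum>i<N. d i a * bb i b k) + (\<Sum>j<N. d j b * bb a j k)"
    by (rule derivation_coords[OF h(1)])
  show "\<And>a b k. a < N \<Longrightarrow> b < N \<Longrightarrow> k < N \<Longrightarrow>
      (\<Sum>m<N. bb a b m * D k m) = (\<Sum>i<N. D i a * bb i b k) - (\<Sum>i<N. D i b * bb i a k)"
    by (rule antiderivation_coords[OF h(2)])
  show "(\<Sum>j<N. d j b * bb a j k) = (\<Sum>j<N. D j b * bb a j k)" if "a < N" "b < N" "k < N" for a b k
  proof -
    have "brk N bb (bv a) (mv N d (bv b)) k = brk N bb (bv a) (mv N D (bv b)) k"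
      using h(3) bv_vecs[OF that(1)] bv_vecs[OF that(2)] by simp
    then show ?thesis
      using that by (simp add: brk_bv_left mv_bv)
  qed
qed

lemma minus_rmult_mat_apply:
  "k < N \<Longrightarrow> a < N \<Longrightarrow> minus_rmult_mat N bb x k a = - (\<Sum>j<N. x j * bb a j k)"
  by (simp add: minus_rmult_mat_def)

lemma lmult_mat_apply: "k < N \<Longrightarrow> a < N \<Longrightarrow> lmult_mat N bb x k a = (\<Sum>i<N. x i * bb i a k)"
  by (simp add: lmult_mat_def)

section \<open>The algebra \<open>R\<close>\<close>

lemma R_bb_apply:
  "R_bb n i j k =
     (if 1 \<le> i \<and> i \<le> n - 1 \<and> j = 1 \<and> k = i + 1 then 1 else 0)
   + (if i = 0 \<and> j = 1 \<and> k = 1 then -1 else 0)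
   + (if 1 \<le> i \<and> i \<le> n \<and> j = 0 \<and> k = i then of_nat i else 0)"
  by (simp add: R_bb_def bv_def sv_def)

lemma R_bb_sum_out:
  assumes "n \<ge> 2"
  shows "(\<Sum>m<n+1. R_bb n a b m * g m) =
     (if 1 \<le> a \<and> a \<le> n - 1 \<and> b = 1 then g (a+1) else 0)
   + (if a = 0 \<and> b = 1 then - g 1 else 0)
   + (if 1 \<le> a \<and> a \<le> n \<and> b = 0 then of_nat a * g a else 0)"
proof -
  have "R_bb n a b m =
       (if m = a + 1 then (if 1 \<le> a \<and> a \<le> n - 1 \<and> b = 1 then 1 else 0) else 0)
     + (if m = 1 then (if a = 0 \<and> b = 1 then -1 else 0) else 0)
     + (if m = a then (if 1 \<le> a \<and> a \<le> n \<and> b = 0 then of_nat a else 0) else 0)" for m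
    by (simp add: R_bb_apply)
  then show ?thesis
    using assms by (simp add: distrib_right sum.distrib sum_delta_mult) auto
qed

lemma R_bb_sum_left:
  assumes "n \<ge> 2"
  shows "(\<Sum>i<n+1. v i * R_bb n i b k) =
     (if 2 \<le> k \<and> k \<le> n \<and> b = 1 then v (k - 1) else 0)
   + (if b = 1 \<and> k = 1 then - v 0 else 0)
   + (if 1 \<le> k \<and> k \<le> n \<and> b = 0 then of_nat k * v k else 0)"
proof -
  have "R_bb n i b k =
       (if i = k - 1 then (if 2 \<le> k \<and> k \<le> n \<and> b = 1 then 1 else 0) else 0)
     + (if i = 0 then (if b = 1 \<and> k = 1 then -1 else 0) else 0)
     + (if i = k then (if 1 \<le> k \<and> k \<le> n \<and> b = 0 then of_nat k else 0) else 0)" for i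
    by (auto simp: R_bb_apply)
  then show ?thesis
    using assms by (simp add: distrib_left sum.distrib sum_mult_delta) auto
qed

lemma R_bb_sum_right:
  assumes "n \<ge> 2"
  shows "(\<Sum>j<n+1. v j * R_bb n a j k) =
     (if 1 \<le> a \<and> a \<le> n - 1 \<and> k = a + 1 then v 1 else 0)
   + (if a = 0 \<and> k = 1 then - v 1 else 0)
   + (if 1 \<le> a \<and> a \<le> n \<and> k = a then of_nat a * v 0 else 0)"
proof -
  have "R_bb n a j k =
       (if j = 1 then (if 1 \<le> a \<and> a \<le> n - 1 \<and> k = a + 1 then 1 else 0)
          + (if a = 0 \<and> k = 1 then -1 else 0) else 0)
     + (if j = 0 then (if 1 \<le> a \<and> a \<le> n \<and> k = a then of_nat a else 0) else 0)" for j
    by (auto simp: R_bb_apply)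
  then show ?thesis
    using assms by (simp add: distrib_left sum.distrib sum_mult_delta)
qed

lemma R_is_leibniz: "n \<ge> 2 \<Longrightarrow> is_leibniz (n+1) (R_bb n)"
  unfolding is_leibniz_def R_bb_sum_out by (auto simp: R_bb_apply)

lemma R_antiderivation_vanishes:
  assumes X: "(d, D) \<in> Bider (n+1) (R_bb n)" and n: "n \<ge> 2"
    and D11: "D 1 1 = 0" and Dk0: "\<And>k. 1 \<le> k \<Longrightarrow> k \<le> n \<Longrightarrow> D k 0 = 0"
  shows "D = 0"
proof -
  note anti = Bider_coords(4)[OF X, unfolded R_bb_sum_out[OF n] R_bb_sum_left[OF n]]
  have col0: "D k 0 = 0" if "k \<le> n" for k
    using that anti[of 0 1 1] n D11 Dk0[of k] by (cases "k = 0") auto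
  have col1: "D k 1 = 0" if "k \<le> n" for k
  proof -
    consider "k = 0" | "k = 1" | "k \<ge> 2" by linarith
    then show ?thesis
    proof cases
      case 3
      have "(of_nat k - 1) * D k 1 = 0"
        using anti[of 0 1 k] n that 3 col0[of "k - 1"] by (simp add: algebra_simps)
      then show ?thesis using 3 by simp
    qed (use anti[of 0 1 0] n D11 in simp_all)
  qed
  have col_ge2: "D k j = 0" if "k \<le> n" "2 \<le> j" "j \<le> n" for k j
    using that anti[of 1 j 1] anti[of 0 j k] n by (cases "k = 0") auto
  show "D = 0"
  proof (rule mats_eq_0I[OF Bider_coords(2)[OF X]])
    show "D k j = 0" if "k < n + 1" "j < n + 1" for k j
      using that col0 col1 col_ge2 by (cases "j \<le> 1") (auto simp: le_Suc_eq)
  qed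
qed

lemma R_derivation_vanishes:
  assumes X: "(d, 0) \<in> Bider (n+1) (R_bb n)" and n: "n \<ge> 2"
  shows "d = 0"
proof -
  note der = Bider_coords(3)[OF X, unfolded R_bb_sum_out[OF n] R_bb_sum_left[OF n] R_bb_sum_right[OF n]]
  note compat = Bider_coords(5)[OF X, unfolded R_bb_sum_right[OF n]]
  have row0: "d 0 b = 0" and row1: "d 1 b = 0" if "b \<le> n" for b
    using compat[of 1 b 1] compat[of 0 b 1] n that by simp_all
  have col0: "d k 0 = 0" if "k \<le> n" for k
    using der[of 0 0 k] n that row0 row1 by (cases "k \<le> 1") (auto simp: le_Suc_eq)
  have off_diag: "d k i = 0" if "1 \<le> k" "k \<le> n" "1 \<le> i" "i \<le> n" "k \<noteq> i" for k i
  proof -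
    have "of_nat i * d k i = of_nat k * d k i"
      using der[of i 0 k] n that row1[of 0] by (simp split: if_splits)
    then show ?thesis using that(5) by simp
  qed
  have diag: "d i i = 0" if "1 \<le> i" "i \<le> n" for i
    using that
  proof (rule zero_by_successor_step[where f = "\<lambda>i. d i i"])
    show "d 1 1 = 0" using row1[of 1] n by simp
    show "d (Suc i) (Suc i) = d i i" if "1 \<le> i" "i < n" for i
      using der[of i 1 "i+1"] n that row1[of 1] by (simp split: if_splits)
  qed
  show "d = 0"
  proof (rule mats_eq_0I[OF Bider_coords(1)[OF X]])
    show "d k j = 0" if "k < n + 1" "j < n + 1" for k j
      using that row0[of j] col0[of k] off_diag[of k j] diag[of j]
      by (cases "k = 0"; cases "j = 0"; cases "k = j") auto
  qed
qed

text \<open>Read off from \<open>L\<^sub>x\<close>, using \<open>[h, e\<^sub>1] = -e\<^sub>1\<close> and \<open>[e\<^sub>k, h] = k e\<^sub>k\<close>.\<close>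
definition R_to_A :: "nat \<Rightarrow> (nat \<Rightarrow> nat \<Rightarrow> complex) \<times> (nat \<Rightarrow> nat \<Rightarrow> complex) \<Rightarrow> nat \<Rightarrow> complex" where
  "R_to_A n X = (\<lambda>k. if k = 0 then - snd X 1 1 else if k \<le> n then snd X k 0 / of_nat k else 0)"

lemma R_to_A_inner_bider:
  assumes n: "n \<ge> 2" and x: "x \<in> vecs (n+1)"
  shows "R_to_A n (inner_bider (n+1) (R_bb n) x) = x"
proof
  fix k
  note L = lmult_mat_apply[where N = "n+1" and bb = "R_bb n", unfolded R_bb_sum_left[OF n]]
  have "lmult_mat (n+1) (R_bb n) x 1 1 = - x 0"
    using L[of 1 1] n by simp
  moreover have "lmult_mat (n+1) (R_bb n) x k 0 = of_nat k * x k" if "1 \<le> k" "k \<le> n"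
    using L[of k 0] n that by simp
  ultimately show "R_to_A n (inner_bider (n+1) (R_bb n) x) k = x k"
    using x by (auto simp: R_to_A_def inner_bider_def vecs_def)
qed

lemma R_to_A_kernel:
  assumes X: "X \<in> Bider (n+1) (R_bb n)" and n: "n \<ge> 2" and zero: "R_to_A n X = 0"
  shows "X = (0, 0)"
proof -
  obtain d D where dD: "X = (d, D)" by (cases X)
  have "D = 0"
  proof (rule R_antiderivation_vanishes[OF X[unfolded dD] n])
    show "D 1 1 = 0" using fun_cong[OF zero, of 0] dD by (simp add: R_to_A_def)
    show "D k 0 = 0" if "1 \<le> k" "k \<le> n" for k
      using fun_cong[OF zero, of k] dD that by (simp add: R_to_A_def)
  qed
  with X dD show ?thesis
    using R_derivation_vanishes[OF _ n] by auto
qed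

theorem R_bider_iso:
  assumes n: "2 \<le> n"
  shows "bider_iso_to_A (n + 1) (R_bb n)"
proof (rule bider_iso_to_A_by_retraction[where \<psi> = "R_to_A n"])
  show "R_to_A n (pair_lin a X Y) = sv a (R_to_A n X) + R_to_A n Y" for X Y a
    by (rule ext) (simp add: R_to_A_def pair_lin_def sv_def add_divide_distrib)
qed (use n R_is_leibniz R_to_A_inner_bider R_to_A_kernel in \<open>auto simp: R_to_A_def vecs_def\<close>)

section \<open>The algebra \<open>R(F\<^sub>n\<^sup>1)\<close>\<close>

lemma RF_bb_apply:
  "RF_bb n p q k =
     (if 3 \<le> p \<and> p \<le> n \<and> q = 2 \<and> k = p + 1 then 1 else 0)
   + (if p = 2 \<and> q = 1 \<and> k = 2 then 1 else 0)
   + (if p = 1 \<and> q = 2 \<and> k = 2 then -1 else 0)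
   + (if 3 \<le> p \<and> p \<le> n + 1 \<and> q = 0 \<and> k = p then 1 else 0)
   + (if 3 \<le> p \<and> p \<le> n + 1 \<and> q = 1 \<and> k = p then of_nat (p - 2) else 0)"
  by (auto simp: RF_bb_def bv_def sv_def)

lemma RF_bb_sum_out:
  assumes "n \<ge> 4"
  shows "(\<Sum>m<n+2. RF_bb n a b m * g m) =
     (if 3 \<le> a \<and> a \<le> n \<and> b = 2 then g (a+1) else 0)
   + (if a = 2 \<and> b = 1 then g 2 else 0)
   - (if a = 1 \<and> b = 2 then g 2 else 0)
   + (if 3 \<le> a \<and> a \<le> n + 1 \<and> b = 0 then g a else 0)
   + (if 3 \<le> a \<and> a \<le> n + 1 \<and> b = 1 then of_nat (a - 2) * g a else 0)"
proof -
  have "RF_bb n a b m =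
       (if m = a + 1 then (if 3 \<le> a \<and> a \<le> n \<and> b = 2 then 1 else 0) else 0)
     + (if m = 2 then (if a = 2 \<and> b = 1 then 1 else 0) + (if a = 1 \<and> b = 2 then -1 else 0) else 0)
     + (if m = a then (if 3 \<le> a \<and> a \<le> n + 1 \<and> b = 0 then 1 else 0)
          + (if 3 \<le> a \<and> a \<le> n + 1 \<and> b = 1 then of_nat (a - 2) else 0) else 0)" for m
    by (auto simp: RF_bb_apply)
  then show ?thesis
    using assms by (simp add: distrib_right sum.distrib sum_delta_mult)
qed

lemma RF_bb_sum_left:
  assumes "n \<ge> 4"
  shows "(\<Sum>i<n+2. v i * RF_bb n i b k) =
     (if 4 \<le> k \<and> k \<le> n + 1 \<and> b = 2 then v (k - 1) else 0)
   + (if b = 1 \<and> k = 2 then v 2 else 0)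
   - (if b = 2 \<and> k = 2 then v 1 else 0)
   + (if 3 \<le> k \<and> k \<le> n + 1 \<and> b = 0 then v k else 0)
   + (if 3 \<le> k \<and> k \<le> n + 1 \<and> b = 1 then of_nat (k - 2) * v k else 0)"
proof -
  have "RF_bb n i b k =
       (if i = k - 1 then (if 4 \<le> k \<and> k \<le> n + 1 \<and> b = 2 then 1 else 0) else 0)
     + (if i = 2 then (if b = 1 \<and> k = 2 then 1 else 0) else 0)
     + (if i = 1 then (if b = 2 \<and> k = 2 then -1 else 0) else 0)
     + (if i = k then (if 3 \<le> k \<and> k \<le> n + 1 \<and> b = 0 then 1 else 0)
          + (if 3 \<le> k \<and> k \<le> n + 1 \<and> b = 1 then of_nat (k - 2) else 0) else 0)" for i
    by (auto simp: RF_bb_apply)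
  then show ?thesis
    using assms by (simp add: distrib_left sum.distrib sum_mult_delta) auto
qed

lemma RF_bb_sum_right:
  assumes "n \<ge> 4"
  shows "(\<Sum>j<n+2. v j * RF_bb n a j k) =
     (if 3 \<le> a \<and> a \<le> n \<and> k = a + 1 then v 2 else 0)
   - (if a = 1 \<and> k = 2 then v 2 else 0)
   + (if a = 2 \<and> k = 2 then v 1 else 0)
   + (if 3 \<le> a \<and> a \<le> n + 1 \<and> k = a then of_nat (a - 2) * v 1 else 0)
   + (if 3 \<le> a \<and> a \<le> n + 1 \<and> k = a then v 0 else 0)"
proof -
  have "RF_bb n a j k =
       (if j = 2 then (if 3 \<le> a \<and> a \<le> n \<and> k = a + 1 then 1 else 0)
          + (if a = 1 \<and> k = 2 then -1 else 0) else 0)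
     + (if j = 1 then (if a = 2 \<and> k = 2 then 1 else 0)
          + (if 3 \<le> a \<and> a \<le> n + 1 \<and> k = a then of_nat (a - 2) else 0) else 0)
     + (if j = 0 then (if 3 \<le> a \<and> a \<le> n + 1 \<and> k = a then 1 else 0) else 0)" for j
    by (auto simp: RF_bb_apply)
  then show ?thesis
    using assms by (simp add: distrib_left sum.distrib sum_mult_delta)
qed

lemma RF_is_leibniz: "n \<ge> 4 \<Longrightarrow> is_leibniz (n+2) (RF_bb n)"
  unfolding is_leibniz_def RF_bb_sum_out by (auto simp: RF_bb_apply)

lemma RF_compat_rows:
  assumes X: "(d, D) \<in> Bider (n+2) (RF_bb n)" and n: "n \<ge> 4" and b: "b \<le> n + 1"
  shows "d 0 b = D 0 b" "d 1 b = D 1 b" "d 2 b = D 2 b"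
proof -
  note compat = Bider_coords(5)[OF X, unfolded RF_bb_sum_right[OF n]]
  show "d 1 b = D 1 b" "d 2 b = D 2 b"
    using compat[of 2 b 2] compat[of 1 b 2] n b by simp_all
  moreover have "d 1 b + d 0 b = D 1 b + D 0 b"
    using compat[of 3 b 3] n b by simp
  ultimately show "d 0 b = D 0 b" by simp
qed

lemma RF_antiderivation_vanishes:
  assumes X: "(d, D) \<in> Bider (n+2) (RF_bb n)" and n: "n \<ge> 4"
    and D22: "D 2 2 = 0" and D21: "D 2 1 = 0"
    and Dk0: "\<And>k. 3 \<le> k \<Longrightarrow> k \<le> n + 1 \<Longrightarrow> D k 0 = 0"
  shows "D = 0"
proof -
  note der = Bider_coords(3)[OF X, unfolded RF_bb_sum_out[OF n] RF_bb_sum_left[OF n] RF_bb_sum_right[OF n]]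
  note anti = Bider_coords(4)[OF X, unfolded RF_bb_sum_out[OF n] RF_bb_sum_left[OF n]]
  have D00: "D 0 0 = 0" and D01: "D 0 1 = 0"
    using der[of 0 2 2] der[of 3 0 3] der[of 1 2 2] der[of 3 1 3] n
      RF_compat_rows(1)[OF X n, of 0] RF_compat_rows(1)[OF X n, of 1] by simp_all
  have col0: "D k 0 = 0" if "k \<le> n + 1" for k
  proof -
    consider "k = 0" | "k = 1" | "k = 2" | "k \<ge> 3" by linarith
    then show ?thesis
      by cases (use D00 anti[of 0 2 2] anti[of 0 1 2] Dk0 that n in simp_all)
  qed
  have col1: "D k 1 = 0" if "k \<le> n + 1" for k
  proof -
    consider "k = 0" | "k = 1" | "k = 2" | "k \<ge> 3" by linarith
    then show ?thesis
      by cases (use D01 anti[of 1 2 2] D21 anti[of 0 1 k] Dk0[of k] that n in simp_all)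
  qed
  have col2: "D k 2 = 0" if "k \<le> n + 1" for k
  proof -
    consider "k = 0" | "k = 1" | "k = 2" | "k = 3" | "k \<ge> 4" by linarith
    then show ?thesis
      by cases (use anti[of 1 2 0] anti[of 1 2 1] D22 anti[of 0 2 3] anti[of 0 2 k] Dk0[of "k - 1"]
          that n in simp_all)
  qed
  have col_ge3: "D k q = 0" if "k \<le> n + 1" "3 \<le> q" "q \<le> n + 1" for k q
    using anti[of 0 q k] anti[of q 0 k] n that by (cases "k \<ge> 3") simp_all
  show "D = 0"
  proof (rule mats_eq_0I[OF Bider_coords(2)[OF X]])
    show "D k q = 0" if "k < n + 2" "q < n + 2" for k q
    proof -
      consider "q = 0" | "q = 1" | "q = 2" | "q \<ge> 3" by linarith
      then show ?thesis
        by cases (use col0 col1 col2 col_ge3 that in simp_all)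
    qed
  qed
qed

lemma RF_derivation_vanishes:
  assumes X: "(d, 0) \<in> Bider (n+2) (RF_bb n)" and n: "n \<ge> 4" and d33: "d 3 3 = 0"
  shows "d = 0"
proof -
  note der = Bider_coords(3)[OF X, unfolded RF_bb_sum_out[OF n] RF_bb_sum_left[OF n] RF_bb_sum_right[OF n]]
  have low_rows: "d 0 b = 0" "d 1 b = 0" "d 2 b = 0" if "b \<le> n + 1" for b
    using RF_compat_rows[OF X n that] by simp_all
  have low_cols: "d k 0 = 0" "d k 1 = 0" "d k 2 = 0" if "3 \<le> k" "k \<le> n + 1" for k
    using der[of 0 0 k] der[of 1 0 k] der[of 2 0 k] n that by simp_all
  have off_diag: "d k q = 0" if "3 \<le> k" "k \<le> n + 1" "3 \<le> q" "q \<le> n + 1" "k \<noteq> q" for k q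
  proof -
    have "of_nat (q - 2) * d k q = of_nat (k - 2) * d k q"
      using der[of q 1 k] n that low_rows[of 1] low_rows[of 0] by auto
    then show ?thesis using that by simp
  qed
  have diag: "d q q = 0" if "3 \<le> q" "q \<le> n + 1" for q
    using that
  proof (rule zero_by_successor_step[where f = "\<lambda>q. d q q"])
    show "d (Suc q) (Suc q) = d q q" if "3 \<le> q" "q < n + 1" for q
      using der[of q 2 "q+1"] n that low_rows[of 2] by (simp split: if_splits)
  qed (rule d33)
  show "d = 0"
  proof (rule mats_eq_0I[OF Bider_coords(1)[OF X]])
    show "d k q = 0" if "k < n + 2" "q < n + 2" for k q
    proof -
      consider "k \<le> 2" | "k \<ge> 3" "q \<le> 2" | "k \<ge> 3" "q \<ge> 3" by linarith
      then show ?thesis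
      proof cases
        case 1
        then consider "k = 0" | "k = 1" | "k = 2" by linarith
        then show ?thesis by cases (use low_rows that in simp_all)
      next
        case 2
        then consider "q = 0" | "q = 1" | "q = 2" by linarith
        then show ?thesis by cases (use low_cols 2 that in simp_all)
      next
        case 3
        then show ?thesis using off_diag[of k q] diag[of q] that by (cases "k = q") auto
      qed
    qed
  qed
qed

text \<open>Read off from \<open>(-R\<^sub>x, L\<^sub>x)\<close>, using \<open>[e\<^sub>1, h\<^sub>2] = e\<^sub>1\<close>, \<open>[h\<^sub>2, e\<^sub>1] = -e\<^sub>1\<close>,
  \<open>[e\<^sub>2, h\<^sub>2] = e\<^sub>2\<close> and \<open>[e\<^sub>i, h\<^sub>1] = e\<^sub>i\<close> for \<open>i \<ge> 2\<close>.\<close>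
definition RF_to_A :: "nat \<Rightarrow> (nat \<Rightarrow> nat \<Rightarrow> complex) \<times> (nat \<Rightarrow> nat \<Rightarrow> complex) \<Rightarrow> nat \<Rightarrow> complex" where
  "RF_to_A n X = (\<lambda>k. if k = 0 then snd X 2 2 - fst X 3 3 else if k = 1 then - snd X 2 2
     else if k = 2 then snd X 2 1 else if k \<le> n + 1 then snd X k 0 else 0)"

lemma RF_to_A_inner_bider:
  assumes n: "n \<ge> 4" and x: "x \<in> vecs (n+2)"
  shows "RF_to_A n (inner_bider (n+2) (RF_bb n) x) = x"
proof
  fix k
  note L = lmult_mat_apply[where N = "n+2" and bb = "RF_bb n", unfolded RF_bb_sum_left[OF n]]
  note R = minus_rmult_mat_apply[where N = "n+2" and bb = "RF_bb n", unfolded RF_bb_sum_right[OF n]]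
  have "lmult_mat (n+2) (RF_bb n) x 2 2 = - x 1" "lmult_mat (n+2) (RF_bb n) x 2 1 = x 2"
    "minus_rmult_mat (n+2) (RF_bb n) x 3 3 = - (x 1 + x 0)"
    using L[of 2 2] L[of 2 1] R[of 3 3] n by simp_all
  moreover have "lmult_mat (n+2) (RF_bb n) x k 0 = x k" if "3 \<le> k" "k \<le> n + 1"
    using L[of k 0] n that by simp
  ultimately show "RF_to_A n (inner_bider (n+2) (RF_bb n) x) k = x k"
    using x by (auto simp: RF_to_A_def inner_bider_def vecs_def)
qed

lemma RF_to_A_kernel:
  assumes X: "X \<in> Bider (n+2) (RF_bb n)" and n: "n \<ge> 4" and zero: "RF_to_A n X = 0"
  shows "X = (0, 0)"
proof -
  obtain d D where dD: "X = (d, D)" by (cases X)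
  have D22: "D 2 2 = 0"
    using fun_cong[OF zero, of 1] dD by (simp add: RF_to_A_def)
  have "D = 0"
  proof (rule RF_antiderivation_vanishes[OF X[unfolded dD] n D22])
    show "D 2 1 = 0" using fun_cong[OF zero, of 2] dD n by (simp add: RF_to_A_def)
    show "D k 0 = 0" if "3 \<le> k" "k \<le> n + 1" for k
      using fun_cong[OF zero, of k] dD that by (simp add: RF_to_A_def)
  qed
  moreover have "d 3 3 = 0"
    using fun_cong[OF zero, of 0] dD D22 by (simp add: RF_to_A_def)
  ultimately show ?thesis
    using X dD RF_derivation_vanishes[OF _ n] by auto
qed

theorem RF_bider_iso:
  assumes n: "4 \<le> n"
  shows "bider_iso_to_A (n + 2) (RF_bb n)"
proof (rule bider_iso_to_A_by_retraction[where \<psi> = "RF_to_A n"])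
  show "RF_to_A n (pair_lin a X Y) = sv a (RF_to_A n X) + RF_to_A n Y" for X Y a
    by (rule ext) (simp add: RF_to_A_def pair_lin_def sv_def algebra_simps)
qed (use n RF_is_leibniz RF_to_A_inner_bider RF_to_A_kernel in \<open>auto simp: RF_to_A_def vecs_def\<close>)

section \<open>The algebras \<open>L\<^sub>1\<close> and \<open>L\<^sub>2\<close>\<close>

definition L_bb :: "complex \<Rightarrow> nat \<Rightarrow> nat \<Rightarrow> nat \<Rightarrow> nat \<Rightarrow> complex" where
  "L_bb e n p q k =
     (if p = 2 \<and> q = 2 \<and> k = 4 then 1 else 0)
   + (if 4 \<le> p \<and> p \<le> n \<and> q = 2 \<and> k = p + 1 then 1 else 0)
   + (if p = 2 \<and> q = 1 \<and> k = 2 then 1 else 0)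
   - (if p = 1 \<and> q = 2 \<and> k = 2 then 1 else 0)
   + (if p = 3 \<and> q = 0 \<and> k = 3 then 1 else 0)
   + (if 4 \<le> p \<and> p \<le> n + 1 \<and> q = 1 \<and> k = p then of_nat (p - 2) else 0)
   - (if p = 0 \<and> q = 3 \<and> k = 3 then e else 0)"

lemma L1_bb_eq: "L1_bb n = L_bb 1 n"
  by (intro ext) (auto simp: L1_bb_def L2_bb_def L_bb_def bv_def sv_def)

lemma L2_bb_eq: "L2_bb n = L_bb 0 n"
  by (intro ext) (auto simp: L2_bb_def L_bb_def bv_def sv_def)

lemma L_bb_sum_out:
  assumes "n \<ge> 4"
  shows "(\<Sum>m<n+2. L_bb e n a b m * g m) =
     (if a = 2 \<and> b = 2 then g 4 else 0)
   + (if 4 \<le> a \<and> a \<le> n \<and> b = 2 then g (a+1) else 0)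
   + (if a = 2 \<and> b = 1 then g 2 else 0)
   - (if a = 1 \<and> b = 2 then g 2 else 0)
   + (if a = 3 \<and> b = 0 then g 3 else 0)
   - (if a = 0 \<and> b = 3 then e * g 3 else 0)
   + (if 4 \<le> a \<and> a \<le> n + 1 \<and> b = 1 then of_nat (a - 2) * g a else 0)"
proof -
  have "L_bb e n a b m =
       (if m = 4 then (if a = 2 \<and> b = 2 then 1 else 0) else 0)
     + (if m = a + 1 then (if 4 \<le> a \<and> a \<le> n \<and> b = 2 then 1 else 0) else 0)
     + (if m = 2 then (if a = 2 \<and> b = 1 then 1 else 0) - (if a = 1 \<and> b = 2 then 1 else 0) else 0)
     + (if m = 3 then (if a = 3 \<and> b = 0 then 1 else 0) - (if a = 0 \<and> b = 3 then e else 0) else 0)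
     + (if m = a then (if 4 \<le> a \<and> a \<le> n + 1 \<and> b = 1 then of_nat (a - 2) else 0) else 0)" for m
    by (auto simp: L_bb_def)
  then show ?thesis
    using assms by (simp add: distrib_right left_diff_distrib sum.distrib sum_subtractf sum_delta_mult)
qed

lemma L_bb_sum_left:
  assumes "n \<ge> 4"
  shows "(\<Sum>i<n+2. v i * L_bb e n i b k) =
     (if b = 2 \<and> k = 4 then v 2 else 0)
   + (if b = 1 \<and> k = 2 then v 2 else 0)
   + (if 5 \<le> k \<and> k \<le> n + 1 \<and> b = 2 then v (k - 1) else 0)
   - (if b = 2 \<and> k = 2 then v 1 else 0)
   + (if b = 0 \<and> k = 3 then v 3 else 0)
   - (if b = 3 \<and> k = 3 then e * v 0 else 0)
   + (if 4 \<le> k \<and> k \<le> n + 1 \<and> b = 1 then of_nat (k - 2) * v k else 0)"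
proof -
  have "L_bb e n i b k =
       (if i = 2 then (if b = 2 \<and> k = 4 then 1 else 0) + (if b = 1 \<and> k = 2 then 1 else 0) else 0)
     + (if i = k - 1 then (if 5 \<le> k \<and> k \<le> n + 1 \<and> b = 2 then 1 else 0) else 0)
     + (if i = 1 then - (if b = 2 \<and> k = 2 then 1 else 0) else 0)
     + (if i = 3 then (if b = 0 \<and> k = 3 then 1 else 0) else 0)
     + (if i = 0 then - (if b = 3 \<and> k = 3 then e else 0) else 0)
     + (if i = k then (if 4 \<le> k \<and> k \<le> n + 1 \<and> b = 1 then of_nat (k - 2) else 0) else 0)" for i
    by (auto simp: L_bb_def)
  then show ?thesis
    using assms by (simp add: distrib_left right_diff_distrib sum.distrib sum_subtractf sum_mult_delta)
      (auto simp: algebra_simps)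
qed

lemma L_bb_sum_right:
  assumes "n \<ge> 4"
  shows "(\<Sum>j<n+2. v j * L_bb e n a j k) =
     (if a = 2 \<and> k = 4 then v 2 else 0)
   + (if 4 \<le> a \<and> a \<le> n \<and> k = a + 1 then v 2 else 0)
   - (if a = 1 \<and> k = 2 then v 2 else 0)
   + (if a = 2 \<and> k = 2 then v 1 else 0)
   + (if 4 \<le> a \<and> a \<le> n + 1 \<and> k = a then of_nat (a - 2) * v 1 else 0)
   + (if a = 3 \<and> k = 3 then v 0 else 0)
   - (if a = 0 \<and> k = 3 then e * v 3 else 0)"
proof -
  have "L_bb e n a j k =
       (if j = 2 then (if a = 2 \<and> k = 4 then 1 else 0) + (if 4 \<le> a \<and> a \<le> n \<and> k = a + 1 then 1 else 0)
          - (if a = 1 \<and> k = 2 then 1 else 0) else 0)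
     + (if j = 1 then (if a = 2 \<and> k = 2 then 1 else 0)
          + (if 4 \<le> a \<and> a \<le> n + 1 \<and> k = a then of_nat (a - 2) else 0) else 0)
     + (if j = 0 then (if a = 3 \<and> k = 3 then 1 else 0) else 0)
     + (if j = 3 then - (if a = 0 \<and> k = 3 then e else 0) else 0)" for j
    by (auto simp: L_bb_def)
  then show ?thesis
    using assms by (simp add: distrib_left right_diff_distrib sum.distrib sum_subtractf sum_mult_delta)
      (auto simp: algebra_simps)
qed

lemma L_is_leibniz:
  assumes n: "n \<ge> 4" and e: "e * e = e"
  shows "is_leibniz (n+2) (L_bb e n)"
proof -
  have "(\<Sum>m<n+2. L_bb e n b c m * L_bb e n a m k) =
      (\<Sum>m<n+2. L_bb e n a b m * L_bb e n m c k) - (\<Sum>m<n+2. L_bb e n a c m * L_bb e n m b k)"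
    if "a < n + 2" "b < n + 2" "c < n + 2" "k < n + 2" for a b c k
  proof -
    consider "b = 0" | "b = 1" | "b = 2" | "b = 3" | "b \<ge> 4" by linarith
    then show ?thesis
      unfolding L_bb_sum_out[OF n] by cases (use n e that in \<open>auto simp: L_bb_def\<close>)
  qed
  then show ?thesis
    unfolding is_leibniz_def by blast
qed

lemma L_compat_rows:
  assumes X: "(d, D) \<in> Bider (n+2) (L_bb e n)" and n: "n \<ge> 4" and b: "b \<le> n + 1"
  shows "d 0 b = D 0 b" "d 1 b = D 1 b" "d 2 b = D 2 b" "e * d 3 b = e * D 3 b"
proof -
  note compat = Bider_coords(5)[OF X, unfolded L_bb_sum_right[OF n]]
  show "d 0 b = D 0 b" "d 1 b = D 1 b" "d 2 b = D 2 b" "e * d 3 b = e * D 3 b"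
    using compat[of 3 b 3] compat[of 2 b 2] compat[of 1 b 2] compat[of 0 b 3] n b by simp_all
qed

lemma L_antiderivation_cols_ge3:
  assumes X: "(d, D) \<in> Bider (n+2) (L_bb e n)" and n: "n \<ge> 4"
    and kq: "k \<le> n + 1" "3 \<le> q" "q \<le> n + 1" "k \<noteq> 3 \<or> q \<noteq> 3"
  shows "D k q = 0"
proof -
  note anti = Bider_coords(4)[OF X, unfolded L_bb_sum_out[OF n] L_bb_sum_left[OF n]]
  show ?thesis
  proof (cases "q = 3")
    case True
    then show ?thesis using anti[of 3 0 k] n kq by simp
  next
    case False
    have "- (if k = 2 then D 2 q else 0) = (if 4 \<le> k then of_nat (k - 2) * D k q else 0)"
      using anti[of 1 q k] n kq False by simp
    then have "(if k = 2 then D 2 q else 0) + (if 4 \<le> k then of_nat (k - 2) * D k q else 0) = 0"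
      by (simp only: neg_eq_iff_add_eq_0)
    then have "(of_nat q - 2) * D k q = 0"
      using anti[of q 1 k] n kq False by simp
    then show ?thesis using kq by simp
  qed
qed

lemma L_antiderivation_vanishes:
  assumes X: "(d, D) \<in> Bider (n+2) (L_bb e n)" and n: "n \<ge> 4"
    and d33: "d 3 3 = 0" and D22: "D 2 2 = 0" and D21: "D 2 1 = 0" and D30: "D 3 0 = 0"
    and Dk1: "\<And>k. 4 \<le> k \<Longrightarrow> k \<le> n + 1 \<Longrightarrow> D k 1 = 0"
  shows "D = 0"
proof -
  note der = Bider_coords(3)[OF X, unfolded L_bb_sum_out[OF n] L_bb_sum_left[OF n] L_bb_sum_right[OF n]]
  note anti = Bider_coords(4)[OF X, unfolded L_bb_sum_out[OF n] L_bb_sum_left[OF n]]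
  have D00: "D 0 0 = 0" and D01: "D 0 1 = 0"
    using der[of 3 0 3] der[of 3 1 3] L_compat_rows(1)[OF X n, of 0] L_compat_rows(1)[OF X n, of 1] n
    by simp_all
  have col0: "D k 0 = 0" if "k \<le> n + 1" for k
  proof -
    consider "k = 0" | "k = 1" | "k = 2" | "k = 3" | "k \<ge> 4" by linarith
    then show ?thesis
      by cases (use D00 anti[of 0 2 2] anti[of 0 1 2] D30 anti[of 0 1 k] that n in simp_all)
  qed
  have col1: "D k 1 = 0" if "k \<le> n + 1" for k
  proof -
    consider "k = 0" | "k = 1" | "k = 2" | "k = 3" | "k \<ge> 4" by linarith
    then show ?thesis
      by cases (use D01 anti[of 1 2 2] D21 anti[of 0 1 3] Dk1 that n in simp_all)
  qed
  have col2: "D k 2 = 0" if "k \<le> n + 1" for k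
  proof -
    consider "k = 0" | "k = 1" | "k = 2" | "k = 3" | "k = 4" | "k \<ge> 5" by linarith
    then show ?thesis
    proof cases
      case 6
      have "of_nat (k - 2) * D k 2 = D k 2"
        using anti[of 1 2 k] Dk1[of "k - 1"] n that 6 by simp
      then show ?thesis using 6 by simp
    qed (use anti[of 1 2 0] anti[of 1 2 1] D22 anti[of 0 2 3] anti[of 1 2 4] D21 n in simp_all)
  qed
  have D33: "D 3 3 = 0"
    using anti[of 0 3 3] D00 L_compat_rows(4)[OF X n, of 3] d33 n by (simp add: algebra_simps) auto
  show "D = 0"
  proof (rule mats_eq_0I[OF Bider_coords(2)[OF X]])
    show "D k q = 0" if "k < n + 2" "q < n + 2" for k q
    proof -
      consider "q = 0" | "q = 1" | "q = 2" | "q \<ge> 3" by linarith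
      then show ?thesis
        by cases (use col0 col1 col2 D33 L_antiderivation_cols_ge3[OF X n, of k q] that in auto)
    qed
  qed
qed

lemma L_derivation_low_cols:
  assumes X: "(d, 0) \<in> Bider (n+2) (L_bb e n)" and n: "n \<ge> 4" and d33: "d 3 3 = 0"
    and kq: "3 \<le> k" "k \<le> n + 1" "q \<le> 3"
  shows "d k q = 0"
proof -
  note der = Bider_coords(3)[OF X, unfolded L_bb_sum_out[OF n] L_bb_sum_left[OF n] L_bb_sum_right[OF n]]
  have d11: "d 1 1 = 0" and d21: "d 2 1 = 0" and d30: "e * d 3 0 = 0"
    using L_compat_rows(2,3)[OF X n, of 1] L_compat_rows(4)[OF X n, of 0] n by simp_all
  have col1: "d k 1 = 0" if "3 \<le> k" "k \<le> n + 1" for k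
    using der[of 1 0 3] der[of 1 1 k] n that by (cases "k = 3") simp_all
  consider "q = 0" | "q = 1" | "q = 2" | "q = 3" using kq by linarith
  then show ?thesis
  proof cases
    case 1
    then show ?thesis
      using der[of 0 0 3] d30 der[of 0 1 k] n kq
      by (cases "k = 3") (simp_all add: algebra_simps)
  next
    case 3
    then show ?thesis
      using der[of 2 0 3] der[of 1 2 4] d11 d21 der[of 1 2 k] col1[of "k - 1"] n kq
      by (cases "k = 3 \<or> k = 4") auto
  qed (use col1 kq d33 der[of 3 0 k] n in auto)
qed

lemma L_derivation_vanishes:
  assumes X: "(d, 0) \<in> Bider (n+2) (L_bb e n)" and n: "n \<ge> 4" and d33: "d 3 3 = 0"
  shows "d = 0"
proof -
  note der = Bider_coords(3)[OF X, unfolded L_bb_sum_out[OF n] L_bb_sum_left[OF n] L_bb_sum_right[OF n]]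
  have low_rows: "d 0 b = 0" "d 1 b = 0" "d 2 b = 0" if "b \<le> n + 1" for b
    using L_compat_rows[OF X n that] by simp_all
  note low_cols = L_derivation_low_cols[OF X n d33]
  have off_diag: "d k p = 0" if "3 \<le> k" "k \<le> n + 1" "4 \<le> p" "p \<le> n + 1" "k \<noteq> p" for k p
  proof -
    have "of_nat (p - 2) * d k p = (if 4 \<le> k then of_nat (k - 2) * d k p else 0)"
      using der[of p 1 k] n that low_rows[of 1] by auto
    then show ?thesis
      using that by (auto split: if_splits)
  qed
  have diag: "d q q = 0" if "4 \<le> q" "q \<le> n + 1" for q
    using that
  proof (rule zero_by_successor_step[where f = "\<lambda>q. d q q"])
    show "d 4 4 = 0"
      using der[of 2 2 4] n low_rows[of 2] by simp
    show "d (Suc q) (Suc q) = d q q" if "4 \<le> q" "q < n + 1" for q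
      using der[of q 2 "q+1"] n that low_rows[of 2] by (simp split: if_splits)
  qed
  show "d = 0"
  proof (rule mats_eq_0I[OF Bider_coords(1)[OF X]])
    show "d k q = 0" if "k < n + 2" "q < n + 2" for k q
    proof -
      consider "k \<le> 2" | "k \<ge> 3" "q \<le> 3" | "k \<ge> 3" "q \<ge> 4" by linarith
      then show ?thesis
      proof cases
        case 1
        then consider "k = 0" | "k = 1" | "k = 2" by linarith
        then show ?thesis by cases (use low_rows that in simp_all)
      next
        case 3
        then show ?thesis using off_diag[of k q] diag[of q] that by (cases "k = q") auto
      qed (use low_cols that in auto)
    qed
  qed
qed

text \<open>Read off from \<open>(-R\<^sub>x, L\<^sub>x)\<close>, using \<open>[e\<^sub>2, h\<^sub>1] = e\<^sub>2\<close>, \<open>[e\<^sub>1, h\<^sub>2] = e\<^sub>1\<close>,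
  \<open>[h\<^sub>2, e\<^sub>1] = -e\<^sub>1\<close> and \<open>[e\<^sub>i, h\<^sub>2] = (i - 1) e\<^sub>i\<close> for \<open>i \<ge> 3\<close>.\<close>
definition L_to_A :: "nat \<Rightarrow> (nat \<Rightarrow> nat \<Rightarrow> complex) \<times> (nat \<Rightarrow> nat \<Rightarrow> complex) \<Rightarrow> nat \<Rightarrow> complex" where
  "L_to_A n X = (\<lambda>k. if k = 0 then - fst X 3 3 else if k = 1 then - snd X 2 2
     else if k = 2 then snd X 2 1 else if k = 3 then snd X 3 0
     else if k \<le> n + 1 then snd X k 1 / of_nat (k - 2) else 0)"

lemma L_to_A_inner_bider:
  assumes n: "n \<ge> 4" and x: "x \<in> vecs (n+2)"
  shows "L_to_A n (inner_bider (n+2) (L_bb e n) x) = x"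
proof
  fix k
  note L = lmult_mat_apply[where N = "n+2" and bb = "L_bb e n", unfolded L_bb_sum_left[OF n]]
  note R = minus_rmult_mat_apply[where N = "n+2" and bb = "L_bb e n", unfolded L_bb_sum_right[OF n]]
  have "minus_rmult_mat (n+2) (L_bb e n) x 3 3 = - x 0" "lmult_mat (n+2) (L_bb e n) x 2 2 = - x 1"
    "lmult_mat (n+2) (L_bb e n) x 2 1 = x 2" "lmult_mat (n+2) (L_bb e n) x 3 0 = x 3"
    using R[of 3 3] L[of 2 2] L[of 2 1] L[of 3 0] n by simp_all
  moreover have "lmult_mat (n+2) (L_bb e n) x k 1 / of_nat (k - 2) = x k" if "4 \<le> k" "k \<le> n + 1"
    using L[of k 1] n that by simp
  ultimately show "L_to_A n (inner_bider (n+2) (L_bb e n) x) k = x k"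
    using x by (auto simp: L_to_A_def inner_bider_def vecs_def)
qed

lemma L_to_A_kernel:
  assumes X: "X \<in> Bider (n+2) (L_bb e n)" and n: "n \<ge> 4" and zero: "L_to_A n X = 0"
  shows "X = (0, 0)"
proof -
  obtain d D where dD: "X = (d, D)" by (cases X)
  have d33: "d 3 3 = 0"
    using fun_cong[OF zero, of 0] dD by (simp add: L_to_A_def)
  have "D = 0"
  proof (rule L_antiderivation_vanishes[OF X[unfolded dD] n d33])
    show "D 2 2 = 0" "D 2 1 = 0" "D 3 0 = 0"
      using fun_cong[OF zero, of 1] fun_cong[OF zero, of 2] fun_cong[OF zero, of 3] dD n
      by (simp_all add: L_to_A_def)
    show "D k 1 = 0" if "4 \<le> k" "k \<le> n + 1" for k
      using fun_cong[OF zero, of k] dD that by (simp add: L_to_A_def)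
  qed
  then show ?thesis
    using X dD L_derivation_vanishes[of d n e] n d33 by auto
qed

theorem L_bider_iso:
  assumes n: "4 \<le> n" and e: "e * e = e"
  shows "bider_iso_to_A (n + 2) (L_bb e n)"
proof (rule bider_iso_to_A_by_retraction[where \<psi> = "L_to_A n"])
  show "L_to_A n (pair_lin a X Y) = sv a (L_to_A n X) + L_to_A n Y" for X Y a
    by (rule ext) (simp add: L_to_A_def pair_lin_def sv_def algebra_simps add_divide_distrib)
qed (use n e L_is_leibniz L_to_A_inner_bider L_to_A_kernel in \<open>auto simp: L_to_A_def vecs_def\<close>)

theorem mainTheorem15:
  fixes n :: nat
  shows "(2 \<le> n \<longrightarrow> bider_iso_to_A (n + 1) (R_bb n))
       \<and> (4 \<le> n \<longrightarrow> bider_iso_to_A (n + 2) (RF_bb n)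
                  \<and> bider_iso_to_A (n + 2) (L1_bb n)
                  \<and> bider_iso_to_A (n + 2) (L2_bb n))"
  using R_bider_iso RF_bider_iso L_bider_iso[of n 1] L_bider_iso[of n 0]
  by (simp add: L1_bb_eq L2_bb_eq)

end
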